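(* For every integer $n\ge1$, $d_n \ge 2^{2^{n-1}}$.
   Context: A delta-matroid $(E,\mathcal F)$ consists of a finite ground set $E$ and a non-empty collection $\mathcal F$ of subsets of $E$ (the feasible sets) satisfying the symmetric exchange axiom: for all $X,Y\in\mathcal F$ and every $e\in X\triangle Y$ there exists $f\in X\triangle Y$ (possibly $f=e$) with $X\triangle\{e,f\}\in\mathcal F$. Let $d_n$ denote the number of labelled delta-matroids with ground set $[n]=\{1,\dots,n\}$, i.e. the number of collections $\mathcal F$ of subsets of $[n]$ such that $([n],\mathcal F)$ is a delta-matroid. *)

theory Defs
  imports Main
begin

definition symdiff :: "'a set \<Rightarrow> 'a set \<Rightarrow> 'a set" where
  "symdiff X Y = (X - Y) \<union> (Y - X)"

definition delta_matroid :: "'a set \<Rightarrow> 'a set set \<Rightarrow> bool" where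
  "delta_matroid E F \<longleftrightarrow> finite E \<and> F \<subseteq> Pow E \<and> F \<noteq> {} \<and>
     (\<forall>X\<in>F. \<forall>Y\<in>F. \<forall>e\<in>symdiff X Y. \<exists>f\<in>symdiff X Y. symdiff X {e, f} \<in> F)"

definition num_delta_matroids :: "nat \<Rightarrow> nat" where
  "num_delta_matroids n = card {F :: nat set set. delta_matroid {1..n} F}"

end

theory Submission
  imports Defs
begin

text \<open>All even subsets of E together with an arbitrary family of further subsets form a
  delta-matroid: from an odd feasible set, the single flip of e already lands on an even set;
  from an even one, either the target is reached (the symmetric difference is {e}) or a second
  element f of the symmetric difference restores even parity. Different families of odd sets
  give different delta-matroids, and half of the 2^n subsets of [n] are odd.\<close>

lemma even_card_symdiff_singleton:
  assumes "finite X"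
  shows "even (card (symdiff X {e})) \<longleftrightarrow> odd (card X)"
proof (cases "e \<in> X")
  case True
  then have "symdiff X {e} = X - {e}" and "card X = Suc (card (X - {e}))"
    using assms by (auto simp: symdiff_def card_Suc_Diff1 simp del: card_Diff_insert)
  then show ?thesis by simp
next
  case False
  then have "symdiff X {e} = insert e X" by (auto simp: symdiff_def)
  then show ?thesis using False assms by simp
qed

lemma even_card_symdiff_doubleton:
  assumes "finite X" "e \<noteq> f"
  shows "even (card (symdiff X {e, f})) \<longleftrightarrow> even (card X)"
proof -
  have "symdiff X {e, f} = symdiff (symdiff X {e}) {f}"
    using assms(2) by (auto simp: symdiff_def)
  moreover have "finite (symdiff X {e})"
    using assms(1) by (simp add: symdiff_def)
  ultimately show ?thesis
    using even_card_symdiff_singleton[of X e] even_card_symdiff_singleton[of "symdiff X {e}" f]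
      assms(1) by simp
qed

lemma delta_matroid_even_subsets_Un:
  assumes "finite E" "G \<subseteq> Pow E"
  shows "delta_matroid E ({X. X \<subseteq> E \<and> even (card X)} \<union> G)" (is "delta_matroid E ?F")
  unfolding delta_matroid_def
proof (intro conjI ballI)
  show "finite E" "?F \<subseteq> Pow E" "?F \<noteq> {}"
    using assms by auto
next
  fix X Y e
  assume X: "X \<in> ?F" and Y: "Y \<in> ?F" and e: "e \<in> symdiff X Y"
  have "X \<subseteq> E" "Y \<subseteq> E"
    using X Y assms(2) by auto
  then have sub: "symdiff X {e, f} \<subseteq> E" if "f \<in> symdiff X Y" for f
    using e that by (auto simp: symdiff_def)
  have fin: "finite X"
    using \<open>X \<subseteq> E\<close> assms(1) finite_subset by blast
  show "\<exists>f\<in>symdiff X Y. symdiff X {e, f} \<in> ?F"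
  proof (cases "even (card X)")
    case False
    then have "even (card (symdiff X {e, e}))"
      using even_card_symdiff_singleton[OF fin] by simp
    then show ?thesis using e sub[OF e] by blast
  next
    case even: True
    show ?thesis
    proof (cases "symdiff X Y = {e}")
      case True
      then have "symdiff X {e, e} = Y" by (auto simp: symdiff_def)
      then show ?thesis using Y True by auto
    next
      case False
      then obtain f where f: "f \<in> symdiff X Y" "f \<noteq> e" using e by blast
      then have "even (card (symdiff X {e, f}))"
        using even_card_symdiff_doubleton[OF fin] even by auto
      then show ?thesis using f sub[OF f(1)] by blast
    qed
  qed
qed

lemma card_odd_subsets:
  assumes "finite S" "S \<noteq> {}"
  shows "card {T. T \<subseteq> S \<and> odd (card T)} = 2 ^ (card S - 1)"
proof -
  have "card {T. T \<subseteq> S \<and> even (card T)} = card {T. T \<subseteq> S \<and> odd (card T)}"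
    using card_subsupersets_even_odd[of S "{}"] assms by auto
  moreover have "card {T. T \<subseteq> S \<and> even (card T)} + card {T. T \<subseteq> S \<and> odd (card T)}
      = card (Pow S)"
    using assms(1) by (subst card_Un_disjoint[symmetric]) (auto intro: arg_cong[where f = card])
  moreover have "card (Pow S) = 2 * 2 ^ (card S - 1)"
    using assms by (simp add: card_Pow power_Suc[symmetric] card_gt_0_iff)
  ultimately show ?thesis by simp
qed

lemma card_delta_matroids_ge:
  assumes "finite E" "E \<noteq> {}"
  shows "2 ^ 2 ^ (card E - 1) \<le> card {F. delta_matroid E F}"
proof -
  let ?Even = "{X. X \<subseteq> E \<and> even (card X)}" and ?Odd = "{X. X \<subseteq> E \<and> odd (card X)}"
  have "inj_on (\<lambda>G. ?Even \<union> G) (Pow ?Odd)"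
    by (rule inj_onI) blast
  moreover have "(\<lambda>G. ?Even \<union> G) ` Pow ?Odd \<subseteq> {F. delta_matroid E F}"
    using delta_matroid_even_subsets_Un[OF assms(1)] by blast
  moreover have "finite {F. delta_matroid E F}"
    by (rule finite_subset[of _ "Pow (Pow E)"]) (auto simp: delta_matroid_def assms(1))
  ultimately have "card (Pow ?Odd) \<le> card {F. delta_matroid E F}"
    by (rule card_inj_on_le)
  moreover have "card (Pow ?Odd) = 2 ^ 2 ^ (card E - 1)"
    using assms by (simp add: card_Pow card_odd_subsets)
  ultimately show ?thesis by simp
qed

theorem corollary3p3:
  fixes n :: nat
  assumes "n \<ge> 1"
  shows "num_delta_matroids n \<ge> 2 ^ (2 ^ (n - 1))"
  using card_delta_matroids_ge[of "{1..n}"] assms by (simp add: num_delta_matroids_def)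

end
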